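(* Let $G$ and $H$ be finite nilpotent groups each of which has at least two non-abelian Sylow subgroups. If $\Gamma_G\cong\Gamma_H$, then $|G|=|H|$.
   Context: For a non-abelian group $G$ with center $Z(G)$, the non-commuting graph $\Gamma_G$ is the simple graph with vertex set $G\setminus Z(G)$ in which two distinct vertices $x,y$ are adjacent if and only if $xy\neq yx$. *)

theory Defs
  imports "HOL-Algebra.Algebra"
begin

definition group_center :: "('a, 'b) monoid_scheme \<Rightarrow> 'a set" where
  "group_center G = {z \<in> carrier G. \<forall>x \<in> carrier G. z \<otimes>\<^bsub>G\<^esub> x = x \<otimes>\<^bsub>G\<^esub> z}"

fun lower_central :: "('a, 'b) monoid_scheme \<Rightarrow> nat \<Rightarrow> 'a set" where
  "lower_central G 0 = carrier G"
| "lower_central G (Suc n) = generate G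
     {h \<otimes>\<^bsub>G\<^esub> g \<otimes>\<^bsub>G\<^esub> inv\<^bsub>G\<^esub> h \<otimes>\<^bsub>G\<^esub> inv\<^bsub>G\<^esub> g | h g. h \<in> lower_central G n \<and> g \<in> carrier G}"

definition nilpotent_group :: "('a, 'b) monoid_scheme \<Rightarrow> bool" where
  "nilpotent_group G \<longleftrightarrow> group G \<and> (\<exists>n. lower_central G n = {\<one>\<^bsub>G\<^esub>})"

definition sylow_subgroup :: "('a, 'b) monoid_scheme \<Rightarrow> nat \<Rightarrow> 'a set \<Rightarrow> bool" where
  "sylow_subgroup G p P \<longleftrightarrow> Factorial_Ring.prime p \<and> subgroup P G \<and> (\<exists>a. card P = p ^ a)
     \<and> \<not> p dvd (order G div card P)"

definition nonabelian_subset :: "('a, 'b) monoid_scheme \<Rightarrow> 'a set \<Rightarrow> bool" where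
  "nonabelian_subset G P \<longleftrightarrow> (\<exists>x \<in> P. \<exists>y \<in> P. x \<otimes>\<^bsub>G\<^esub> y \<noteq> y \<otimes>\<^bsub>G\<^esub> x)"

definition two_nonabelian_sylows :: "('a, 'b) monoid_scheme \<Rightarrow> bool" where
  "two_nonabelian_sylows G \<longleftrightarrow> (\<exists>p q P Q. sylow_subgroup G p P \<and> sylow_subgroup G q Q \<and> P \<noteq> Q
      \<and> nonabelian_subset G P \<and> nonabelian_subset G Q)"

text \<open>Isomorphism of non-commuting graphs: vertex sets G - Z(G), H - Z(H);
  x, y adjacent iff xy \<noteq> yx (this already forces x \<noteq> y).\<close>
definition noncomm_graph_iso :: "('a, 'b) monoid_scheme \<Rightarrow> ('c, 'd) monoid_scheme \<Rightarrow> bool" where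
  "noncomm_graph_iso G H \<longleftrightarrow> (\<exists>f. bij_betw f (carrier G - group_center G) (carrier H - group_center H)
     \<and> (\<forall>x \<in> carrier G - group_center G. \<forall>y \<in> carrier G - group_center G.
          (x \<otimes>\<^bsub>G\<^esub> y \<noteq> y \<otimes>\<^bsub>G\<^esub> x) \<longleftrightarrow> (f x \<otimes>\<^bsub>H\<^esub> f y \<noteq> f y \<otimes>\<^bsub>H\<^esub> f x)))"

end

theory Submission
  imports Defs
begin

text \<open>A finite nilpotent group \<open>G\<close> with non-abelian Sylow subgroups \<open>P\<close> and \<open>Q\<close> factors as
  \<open>G = A B\<close>, where \<open>A \<supseteq> P\<close> is the \<open>p\<close>-part and \<open>B \<supseteq> Q\<close> the \<open>p'\<close>-part; \<open>A\<close> and \<open>B\<close> are non-abelian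
  and commute elementwise. For a set \<open>S\<close> of vertices of \<open>\<Gamma>\<^sub>G\<close>, \<open>|C(S)| - |Z(G)|\<close> is the number of
  vertices commuting with all of \<open>S\<close>, so it is preserved by a graph isomorphism \<open>f\<close>. With
  \<open>S = A - Z(G)\<close>, \<open>T = B - Z(G)\<close> we have \<open>|C(S)| |C(T)| = |G| |Z(G)|\<close>, while in \<open>H\<close> only
  \<open>|C(f S)| |C(f T)| \<le> |H| |C(f S) \<inter> C(f T)|\<close> holds; since \<open>C(S)\<close> and \<open>C(T)\<close> are proper subgroups,
  this forces \<open>|Z(G)| \<le> |Z(H)|\<close>. By symmetry the centres have the same order, and
  \<open>|G| - |Z(G)| = |H| - |Z(H)|\<close> is the number of vertices.\<close>

context group
begin

section \<open>Lower central series\<close>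

abbreviation commutator :: "'a \<Rightarrow> 'a \<Rightarrow> 'a" where
  "commutator x y \<equiv> x \<otimes> y \<otimes> inv x \<otimes> inv y"

lemma inv_mult_cancel_left [simp]: "x \<in> carrier G \<Longrightarrow> y \<in> carrier G \<Longrightarrow> inv x \<otimes> (x \<otimes> y) = y"
  by (simp add: m_assoc[symmetric])

lemma mult_inv_cancel_left [simp]: "x \<in> carrier G \<Longrightarrow> y \<in> carrier G \<Longrightarrow> x \<otimes> (inv x \<otimes> y) = y"
  by (simp add: m_assoc[symmetric])

lemma conj_commutator:
  assumes "g \<in> carrier G" "h \<in> carrier G" "k \<in> carrier G"
  shows "g \<otimes> commutator h k \<otimes> inv g = commutator (g \<otimes> h \<otimes> inv g) (g \<otimes> k \<otimes> inv g)"
  using assms by (simp add: m_assoc inv_mult_group)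

lemma commute_of_commutator_eq_one:
  assumes "x \<in> carrier G" "y \<in> carrier G" "commutator x y = \<one>"
  shows "x \<otimes> y = y \<otimes> x"
proof -
  have "commutator x y \<otimes> y \<otimes> x = y \<otimes> x" using assms by simp
  then show ?thesis using assms by (simp add: m_assoc)
qed

lemma lower_central_normal: "lower_central G n \<lhd> G"
proof (induction n)
  case 0
  show ?case by (auto intro!: normal_invI subgroup_self)
next
  case (Suc n)
  have sub: "lower_central G n \<subseteq> carrier G"
    using Suc normal_imp_subgroup subgroup.subset by blast
  show ?case unfolding lower_central.simps
  proof (rule normal_generateI)
    fix c g assume "c \<in> {commutator h k |h k. h \<in> lower_central G n \<and> k \<in> carrier G}"
      and g: "g \<in> carrier G"
    then obtain h k where c: "c = commutator h k" and h: "h \<in> lower_central G n"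
      and k: "k \<in> carrier G" by blast
    have "g \<otimes> h \<otimes> inv g \<in> lower_central G n" using Suc normal_invE(2) h g by blast
    then show "g \<otimes> c \<otimes> inv g \<in> {commutator h k |h k. h \<in> lower_central G n \<and> k \<in> carrier G}"
      using conj_commutator[OF g _ k, of h] c h k g sub by blast
  qed (use sub in auto)
qed

lemma lower_central_subset: "lower_central G n \<subseteq> carrier G"
  using lower_central_normal normal_imp_subgroup subgroup.subset by blast

lemma commutator_in_lower_central_Suc:
  "h \<in> lower_central G n \<Longrightarrow> g \<in> carrier G \<Longrightarrow> commutator h g \<in> lower_central G (Suc n)"
  by (auto intro: generate.incl)

text \<open>Nilpotent groups satisfy the normalizer condition: take the last term of the lower central
  series not contained in \<open>K\<close>; its elements normalize \<open>K\<close> because their commutators with \<open>K\<close> lie in \<open>K\<close>.\<close>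

lemma nilpotent_normalizes_outside_proper_subgroup:
  assumes "nilpotent_group G" "subgroup K G" "K \<noteq> carrier G"
  obtains g where "g \<in> carrier G - K" "\<And>k. k \<in> K \<Longrightarrow> g \<otimes> k \<otimes> inv g \<in> K"
proof -
  obtain N where "lower_central G N = {\<one>}" using assms(1) unfolding nilpotent_group_def by blast
  then have ex: "\<exists>j. lower_central G j \<subseteq> K"
    using subgroup.one_closed[OF assms(2)] by (intro exI[of _ N]) auto
  define j where "j = (LEAST j. lower_central G j \<subseteq> K)"
  have j: "lower_central G j \<subseteq> K" using LeastI_ex[OF ex] unfolding j_def .
  have "j \<noteq> 0" using j assms(2,3) subgroup.subset by fastforce
  then obtain i where i: "j = Suc i" using not0_implies_Suc by blast
  have "\<not> lower_central G i \<subseteq> K" using Least_le[of _ i] i j_def by fastforce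
  then obtain g where g: "g \<in> lower_central G i" "g \<notin> K" by auto
  have gc: "g \<in> carrier G" using g lower_central_subset by auto
  show thesis
  proof (rule that)
    show "g \<in> carrier G - K" using g gc by blast
  next
    fix k assume k: "k \<in> K"
    have kc: "k \<in> carrier G" using k subgroup.subset[OF assms(2)] by blast
    have "commutator g k \<in> K" using commutator_in_lower_central_Suc[OF g(1) kc] j i by blast
    then have "commutator g k \<otimes> k \<in> K" using k subgroup.m_closed[OF assms(2)] by blast
    then show "g \<otimes> k \<otimes> inv g \<in> K" using gc kc by (simp add: m_assoc)
  qed
qed

section \<open>Elements of coprime order in nilpotent groups\<close>

lemma pow_commute:
  assumes "x \<in> carrier G" "y \<in> carrier G" "x \<otimes> y = y \<otimes> x"
  shows "x [^] (k::nat) \<otimes> y = y \<otimes> x [^] k"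
proof (induction k)
  case (Suc k)
  have "x [^] Suc k \<otimes> y = (x [^] k \<otimes> y) \<otimes> x" using assms by (simp add: m_assoc)
  also have "\<dots> = y \<otimes> x [^] Suc k" using Suc assms by (simp add: m_assoc)
  finally show ?case .
qed (use assms in simp)

lemma inv_commute:
  assumes "c \<in> carrier G" "x \<in> carrier G" "c \<otimes> x = x \<otimes> c"
  shows "inv c \<otimes> x = x \<otimes> inv c"
proof -
  have "inv c \<otimes> (x \<otimes> c) \<otimes> inv c = inv c \<otimes> (c \<otimes> x) \<otimes> inv c" using assms by simp
  then show ?thesis using assms(1,2) by (simp add: m_assoc)
qed

lemma pow_mult_eq_of_central_commutator:
  assumes x: "x \<in> carrier G" and y: "y \<in> carrier G" and c: "c \<in> carrier G"
    and cx: "c \<otimes> x = x \<otimes> c" and cy: "c \<otimes> y = y \<otimes> c" and xy: "x \<otimes> y = c \<otimes> y \<otimes> x"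
  shows "x [^] (k::nat) \<otimes> y = c [^] k \<otimes> y \<otimes> x [^] k"
proof (induction k)
  case (Suc k)
  have "x [^] Suc k \<otimes> y = (x [^] k \<otimes> c) \<otimes> y \<otimes> x"
    using x y c by (simp add: xy m_assoc)
  also have "\<dots> = c \<otimes> (x [^] k \<otimes> y) \<otimes> x"
    using x y c by (simp only: pow_commute[OF x c cx[symmetric]]) (simp add: m_assoc)
  also have "\<dots> = c [^] Suc k \<otimes> y \<otimes> x [^] Suc k"
    using x y c by (simp add: Suc m_assoc[symmetric] nat_pow_Suc2[of c k, symmetric])
  finally show ?case .
qed (use y in simp)

text \<open>If \<open>c = [x, y]\<close> commutes with \<open>x\<close> and \<open>y\<close>, then \<open>x\<^sup>k y = c\<^sup>k y x\<^sup>k\<close>; with \<open>x\<^sup>a = 1\<close> this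
  forces \<open>c\<^sup>a = 1\<close>, and symmetrically \<open>c\<^sup>b = 1\<close>.\<close>

lemma commutator_eq_one_of_central_coprime:
  assumes x: "x \<in> carrier G" and y: "y \<in> carrier G"
    and cx: "commutator x y \<otimes> x = x \<otimes> commutator x y"
    and cy: "commutator x y \<otimes> y = y \<otimes> commutator x y"
    and xa: "x [^] (a::nat) = \<one>" and yb: "y [^] (b::nat) = \<one>" and "coprime a b"
  shows "commutator x y = \<one>"
proof -
  define c where "c = commutator x y"
  have cc: "c \<in> carrier G" and ic: "inv c \<in> carrier G" using x y c_def by simp_all
  have cx': "c \<otimes> x = x \<otimes> c" and cy': "c \<otimes> y = y \<otimes> c" using cx cy c_def by auto
  have ix: "inv c \<otimes> x = x \<otimes> inv c" and iy: "inv c \<otimes> y = y \<otimes> inv c"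
    using inv_commute[OF cc x cx'] inv_commute[OF cc y cy'] .
  have xy: "x \<otimes> y = c \<otimes> y \<otimes> x" using x y unfolding c_def by (simp add: m_assoc)
  have yx: "y \<otimes> x = inv c \<otimes> x \<otimes> y" using x y cc by (simp add: xy m_assoc)
  have "y = c [^] a \<otimes> y"
    using pow_mult_eq_of_central_commutator[OF x y cc cx' cy' xy, of a] xa x y cc by simp
  then have "c [^] a = \<one>" using y cc by simp
  moreover have "x = inv c [^] b \<otimes> x"
    using pow_mult_eq_of_central_commutator[OF y x ic iy ix yx, of b] yb x y cc by simp
  then have "c [^] b = \<one>" using x cc by (simp add: nat_pow_inv)
  ultimately have "ord c dvd a" "ord c dvd b" using pow_eq_id cc by auto
  then have "ord c = 1" using \<open>coprime a b\<close> coprime_common_divisor by fastforce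
  then show ?thesis using ord_eq_1 cc c_def by simp
qed

text \<open>Modulo \<open>K\<close> the commutator \<open>[x, y]\<close> commutes with \<open>x\<close> and \<open>y\<close>, so it is trivial in \<open>G/K\<close>.\<close>

lemma commutator_in_normal_of_coprime:
  assumes K: "K \<lhd> G" and x: "x \<in> carrier G" and y: "y \<in> carrier G"
    and xa: "x [^] (a::nat) = \<one>" and yb: "y [^] (b::nat) = \<one>" and ab: "coprime a b"
    and cx: "commutator (commutator x y) x \<in> K" and cy: "commutator (commutator x y) y \<in> K"
  shows "commutator x y \<in> K"
proof -
  have KS: "subgroup K G" using K normal_imp_subgroup by blast
  interpret Q: group "G Mod K" using K normal.factorgroup_is_group by blast
  interpret \<pi>: group_hom G "G Mod K" "(#>) K"
    using K normal.r_coset_hom_Mod by unfold_locales blast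
  have kernel: "K #> u = \<one>\<^bsub>G Mod K\<^esub>" if "u \<in> K" for u
    using coset_join2[OF _ KS that] that subgroup.subset[OF KS] by auto
  define c where "c = commutator x y"
  have cc: "c \<in> carrier G" using x y c_def by simp
  let ?X = "K #> x" and ?Y = "K #> y" and ?C = "K #> c"
  have X: "?X \<in> carrier (G Mod K)" and Y: "?Y \<in> carrier (G Mod K)"
    and C': "?C \<in> carrier (G Mod K)" using x y cc by simp_all
  have C: "?C = Q.commutator ?X ?Y"
    using x y unfolding c_def by simp
  have "K #> commutator c x = Q.commutator ?C ?X"
    using x cc by simp
  then have "Q.commutator ?C ?X = \<one>\<^bsub>G Mod K\<^esub>"
    using kernel[OF cx[folded c_def]] by metis
  then have CX: "?C \<otimes>\<^bsub>G Mod K\<^esub> ?X = ?X \<otimes>\<^bsub>G Mod K\<^esub> ?C"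
    by (rule Q.commute_of_commutator_eq_one[OF C' X])
  have "K #> commutator c y = Q.commutator ?C ?Y"
    using y cc by simp
  then have "Q.commutator ?C ?Y = \<one>\<^bsub>G Mod K\<^esub>"
    using kernel[OF cy[folded c_def]] by metis
  then have CY: "?C \<otimes>\<^bsub>G Mod K\<^esub> ?Y = ?Y \<otimes>\<^bsub>G Mod K\<^esub> ?C"
    by (rule Q.commute_of_commutator_eq_one[OF C' Y])
  have "?X [^]\<^bsub>G Mod K\<^esub> a = \<one>\<^bsub>G Mod K\<^esub>" "?Y [^]\<^bsub>G Mod K\<^esub> b = \<one>\<^bsub>G Mod K\<^esub>"
    using \<pi>.hom_nat_pow x y xa yb by (metis \<pi>.hom_one)+
  then have "?C = \<one>\<^bsub>G Mod K\<^esub>"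
    using Q.commutator_eq_one_of_central_coprime[OF X Y _ _ _ _ ab] CX CY unfolding C by blast
  then show ?thesis using coset_join1[OF _ cc KS] unfolding c_def by simp
qed

text \<open>The commutator lies in every term of the lower central series: if it lies in \<open>\<gamma>\<^sub>i\<close>, then
  it is central modulo \<open>\<gamma>\<^sub>i\<^sub>+\<^sub>1\<close>.\<close>

lemma nilpotent_coprime_orders_commute:
  assumes "nilpotent_group G" and x: "x \<in> carrier G" and y: "y \<in> carrier G"
    and xa: "x [^] (a::nat) = \<one>" and yb: "y [^] (b::nat) = \<one>" and ab: "coprime a b"
  shows "x \<otimes> y = y \<otimes> x"
proof -
  obtain N where N: "lower_central G N = {\<one>}" using assms(1) unfolding nilpotent_group_def by blast
  have "commutator x y \<in> lower_central G i" for i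
  proof (induction i)
    case (Suc i)
    show ?case
      using commutator_in_normal_of_coprime[OF lower_central_normal x y xa yb ab]
        commutator_in_lower_central_Suc[OF Suc x] commutator_in_lower_central_Suc[OF Suc y] by blast
  qed (use x y in simp)
  then show ?thesis using commute_of_commutator_eq_one[OF x y] N by blast
qed

section \<open>Sylow subgroups of nilpotent groups\<close>

lemma conj_pow:
  assumes "g \<in> carrier G" "h \<in> carrier G"
  shows "(g \<otimes> h \<otimes> inv g) [^] (n::nat) = g \<otimes> h [^] n \<otimes> inv g"
  by (induction n) (use assms in \<open>simp_all add: m_assoc\<close>)

lemma pow_card_subgroup_eq_one:
  assumes "subgroup P G" "finite (carrier G)" "h \<in> P"
  shows "h [^] card P = \<one>"
proof -
  interpret P: group "G\<lparr>carrier := P\<rparr>" using assms(1) subgroup_imp_group by blast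
  have "h [^]\<^bsub>G\<lparr>carrier := P\<rparr>\<^esub> order (G\<lparr>carrier := P\<rparr>) = \<one>\<^bsub>G\<lparr>carrier := P\<rparr>\<^esub>"
    using P.pow_order_eq_1 assms by simp
  then show ?thesis using nat_pow_consistent[of h "card P" P] by (simp add: order_def)
qed

text \<open>A Sylow \<open>p\<close>-subgroup \<open>P\<close> that is normal in a subgroup \<open>N\<close> contains every \<open>p\<close>-element of \<open>N\<close>:
  otherwise \<open>p\<close> divides \<open>|N/P|\<close>, hence \<open>p |P|\<close> divides \<open>|G|\<close>.\<close>

lemma p_element_in_normal_sylow:
  assumes syl: "sylow_subgroup G p P" and fin: "finite (carrier G)"
    and N: "subgroup N G" and PN: "P \<lhd> G\<lparr>carrier := N\<rparr>"
    and y: "y \<in> N" and yp: "y [^] (p ^ k) = \<one>"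
  shows "y \<in> P"
proof (rule ccontr)
  assume yP: "y \<notin> P"
  have p: "Factorial_Ring.prime p" and ndvd: "\<not> p dvd order G div card P"
    using syl unfolding sylow_subgroup_def by auto
  let ?N = "G\<lparr>carrier := N\<rparr>"
  interpret N: group ?N using N subgroup_imp_group by blast
  interpret Q: group "?N Mod P" using PN normal.factorgroup_is_group by blast
  interpret \<pi>: group_hom ?N "?N Mod P" "(#>\<^bsub>?N\<^esub>) P"
    using PN normal.r_coset_hom_Mod by unfold_locales blast
  have PS: "subgroup P ?N" using PN normal_imp_subgroup by blast
  have yN: "y \<in> carrier ?N" using y by simp
  let ?Y = "P #>\<^bsub>?N\<^esub> y"
  have Y: "?Y \<in> carrier (?N Mod P)" using \<pi>.hom_closed[OF yN] .
  have "?Y [^]\<^bsub>?N Mod P\<^esub> (p ^ k) = P #>\<^bsub>?N\<^esub> (y [^]\<^bsub>?N\<^esub> (p ^ k))"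
    using \<pi>.hom_nat_pow[OF yN] by simp
  also have "\<dots> = P #>\<^bsub>?N\<^esub> \<one>\<^bsub>?N\<^esub>" using yp nat_pow_consistent[of y "p ^ k" N] by simp
  also have "\<dots> = \<one>\<^bsub>?N Mod P\<^esub>" by (rule \<pi>.hom_one)
  finally have "?Y [^]\<^bsub>?N Mod P\<^esub> (p ^ k) = \<one>\<^bsub>?N Mod P\<^esub>" .
  then obtain j where j: "Q.ord ?Y = p ^ j" using Q.pow_eq_id[OF Y] divides_primepow_nat[OF p] by blast
  have "?Y \<noteq> \<one>\<^bsub>?N Mod P\<^esub>" using N.rcos_self[OF yN PS] yP by auto
  then have "j \<noteq> 0" using j Q.ord_eq_1[OF Y] by auto
  then have "p dvd Q.ord ?Y" using j by simp
  also have "\<dots> dvd order (?N Mod P)" using Q.ord_dvd_group_order[OF Y] .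
  finally have "p * card P dvd order (?N Mod P) * card P" by (rule mult_dvd_mono) simp
  also have "\<dots> = card N" using N.lagrange[OF PS] unfolding order_def FactGroup_def by simp
  also have "card N dvd order G" using lagrange[OF N] by (metis dvd_triv_right)
  finally have "p * card P dvd order G" .
  moreover have "card P > 0"
    using subgroup.finite_imp_card_positive[OF PS] finite_subset[OF subgroup.subset[OF N] fin] by simp
  ultimately have "p dvd order G div card P" using dvd_div_iff_mult dvd_mult_right by blast
  then show False using ndvd by simp
qed

text \<open>If the normalizer \<open>N\<close> of \<open>P\<close> were proper, some \<open>g \<notin> N\<close> would normalize \<open>N\<close>; conjugation
  by \<open>g\<close> maps \<open>P\<close> into the \<open>p\<close>-elements of \<open>N\<close>, which lie in \<open>P\<close>, so \<open>g \<in> N\<close> after all.\<close>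

lemma nilpotent_sylow_normal:
  assumes nil: "nilpotent_group G" and fin: "finite (carrier G)" and syl: "sylow_subgroup G p P"
  shows "P \<lhd> G"
proof -
  have PS: "subgroup P G" using syl unfolding sylow_subgroup_def by blast
  obtain a where card: "card P = p ^ a" using syl unfolding sylow_subgroup_def by blast
  have Psub: "P \<subseteq> carrier G" using PS subgroup.subset by blast
  let ?N = "normalizer G P"
  have NS: "subgroup ?N G" using normalizer_imp_subgroup[OF Psub] .
  have PN: "P \<lhd> G\<lparr>carrier := ?N\<rparr>" using subgroup_in_normalizer[OF PS] .
  have "?N = carrier G"
  proof (rule ccontr)
    assume "?N \<noteq> carrier G"
    then obtain g where g: "g \<in> carrier G - ?N" and gN: "\<And>k. k \<in> ?N \<Longrightarrow> g \<otimes> k \<otimes> inv g \<in> ?N"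
      using nilpotent_normalizes_outside_proper_subgroup[OF nil NS] by blast
    have gc: "g \<in> carrier G" using g by blast
    have PN': "P \<subseteq> ?N" using normal_imp_subgroup[OF PN] subgroup.subset by fastforce
    have "(\<lambda>h. g \<otimes> h \<otimes> inv g) ` P \<subseteq> P"
    proof clarify
      fix h assume h: "h \<in> P"
      have "(g \<otimes> h \<otimes> inv g) [^] (p ^ a) = \<one>"
        using conj_pow[OF gc] pow_card_subgroup_eq_one[OF PS fin h] card h Psub gc by auto
      then show "g \<otimes> h \<otimes> inv g \<in> P"
        using p_element_in_normal_sylow[OF syl fin NS PN] gN h PN' by blast
    qed
    moreover have "inj_on (\<lambda>h. g \<otimes> h \<otimes> inv g) P"
      using gc Psub by (intro inj_onI) (metis inv_closed l_cancel m_closed r_cancel subsetD)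
    ultimately have "(\<lambda>h. g \<otimes> h \<otimes> inv g) ` P = P"
      using card_subset_eq finite_subset[OF Psub fin] card_image by metis
    moreover have "g <#\<^bsub>G\<^esub> P #> inv g = (\<lambda>h. g \<otimes> h \<otimes> inv g) ` P"
      unfolding l_coset_def r_coset_def by auto
    ultimately have "g \<in> ?N" unfolding normalizer_def stabilizer_def using gc Psub by simp
    then show False using g by blast
  qed
  then show ?thesis using PN by simp
qed

lemma nilpotent_p_element_in_sylow:
  assumes "nilpotent_group G" "finite (carrier G)" "sylow_subgroup G p P"
    and "y \<in> carrier G" "y [^] (p ^ k) = \<one>"
  shows "y \<in> P"
  using p_element_in_normal_sylow[OF assms(3,2) subgroup_self] nilpotent_sylow_normal[OF assms(1-3)] assms(4,5)
  by simp

lemma nilpotent_sylow_unique: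
  assumes "nilpotent_group G" "finite (carrier G)" "sylow_subgroup G p P" "sylow_subgroup G p Q"
  shows "P = Q"
proof -
  have "P' \<subseteq> P''" if P': "sylow_subgroup G p P'" and P'': "sylow_subgroup G p P''" for P' P''
  proof
    fix h assume h: "h \<in> P'"
    obtain a where "card P' = p ^ a" and S: "subgroup P' G" using P' unfolding sylow_subgroup_def by blast
    then have "h [^] (p ^ a) = \<one>" using pow_card_subgroup_eq_one[OF S assms(2) h] by simp
    then show "h \<in> P''" using nilpotent_p_element_in_sylow[OF assms(1,2) P''] h subgroup.subset[OF S] by blast
  qed
  then show ?thesis using assms(3,4) by blast
qed

lemma coprime_order_factorization:
  assumes fin: "finite (carrier G)" and n: "order G = r * s" and "coprime r s" and g: "g \<in> carrier G"
  obtains x y where "x \<in> carrier G" "y \<in> carrier G" "x [^] r = \<one>" "y [^] s = \<one>" "g = x \<otimes> y"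
proof -
  have "gcd (int r) (int s) = 1" using \<open>coprime r s\<close> by (simp flip: coprime_iff_gcd_eq_1)
  then obtain u v :: int where uv: "u * int r + v * int s = 1" using bezout_int by metis
  have gn: "g [^] int (order G) = \<one>" using pow_order_eq_1[OF g] int_pow_int by metis
  define x where "x = g [^] (v * int s)"
  define y where "y = g [^] (u * int r)"
  show thesis
  proof
    show "x \<in> carrier G" "y \<in> carrier G" unfolding x_def y_def using g by simp_all
    have "x [^] int r = (g [^] int (order G)) [^] v"
      unfolding x_def using g n by (simp add: int_pow_pow ac_simps)
    then show "x [^] r = \<one>" using gn int_pow_int by (metis int_pow_one)
    have "y [^] int s = (g [^] int (order G)) [^] u"
      unfolding y_def using g n by (simp add: int_pow_pow ac_simps)
    then show "y [^] s = \<one>" using gn int_pow_int by (metis int_pow_one)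
    have "g = g [^] (v * int s + u * int r)" using uv g by (simp add: add.commute)
    then show "g = x \<otimes> y" unfolding x_def y_def using int_pow_mult[OF g] by simp
  qed
qed

lemma nonabelian_subset_mono: "nonabelian_subset G A \<Longrightarrow> A \<subseteq> B \<Longrightarrow> nonabelian_subset G B"
  unfolding nonabelian_subset_def by blast

text \<open>Write \<open>|G| = p\<^sup>a m\<close> with \<open>|P| = p\<^sup>a\<close> and take \<open>A\<close>, \<open>B\<close> the elements killed by \<open>p\<^sup>a\<close> and by \<open>m\<close>.
  Then \<open>Q \<subseteq> B\<close> because \<open>q \<noteq> p\<close>, the Sylow subgroup for a given prime being unique.\<close>

lemma nilpotent_commuting_nonabelian_factorization:
  assumes nil: "nilpotent_group G" and fin: "finite (carrier G)" and two: "two_nonabelian_sylows G"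
  obtains A B where "A \<subseteq> carrier G" "B \<subseteq> carrier G" "\<And>x y. x \<in> A \<Longrightarrow> y \<in> B \<Longrightarrow> x \<otimes> y = y \<otimes> x"
    "A <#> B = carrier G" "nonabelian_subset G A" "nonabelian_subset G B"
proof -
  obtain p q P Q where P: "sylow_subgroup G p P" and Q: "sylow_subgroup G q Q" and "P \<noteq> Q"
    and naP: "nonabelian_subset G P" and naQ: "nonabelian_subset G Q"
    using two unfolding two_nonabelian_sylows_def by blast
  have "p \<noteq> q" using nilpotent_sylow_unique[OF nil fin P] Q \<open>P \<noteq> Q\<close> by blast
  obtain a where a: "card P = p ^ a" and PS: "subgroup P G" and p: "Factorial_Ring.prime p"
    and ndvd: "\<not> p dvd order G div card P"
    using P unfolding sylow_subgroup_def by blast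
  obtain b where b: "card Q = q ^ b" and QS: "subgroup Q G" and q: "Factorial_Ring.prime q"
    using Q unfolding sylow_subgroup_def by blast
  define m where "m = order G div p ^ a"
  have n: "order G = p ^ a * m" using lagrange[OF PS] a unfolding m_def by (metis dvd_triv_right dvd_mult_div_cancel)
  have pm: "coprime (p ^ a) m" using ndvd a p unfolding m_def by (simp add: prime_imp_coprime)
  define A where "A = {x \<in> carrier G. x [^] (p ^ a) = \<one>}"
  define B where "B = {y \<in> carrier G. y [^] m = \<one>}"
  show thesis
  proof
    show "A \<subseteq> carrier G" "B \<subseteq> carrier G" unfolding A_def B_def by auto
    show "x \<otimes> y = y \<otimes> x" if "x \<in> A" "y \<in> B" for x y
      using nilpotent_coprime_orders_commute[OF nil _ _ _ _ pm] that unfolding A_def B_def by blast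
    show "A <#> B = carrier G"
    proof
      show "A <#> B \<subseteq> carrier G" by (rule set_mult_closed) (auto simp: A_def B_def)
      show "carrier G \<subseteq> A <#> B"
      proof
        fix g assume "g \<in> carrier G"
        then obtain x y where "x \<in> carrier G" "y \<in> carrier G" "x [^] (p ^ a) = \<one>" "y [^] m = \<one>" "g = x \<otimes> y"
          using coprime_order_factorization[OF fin n pm] by metis
        then show "g \<in> A <#> B" unfolding A_def B_def set_mult_def by blast
      qed
    qed
    have "P \<subseteq> A" using pow_card_subgroup_eq_one[OF PS fin, unfolded a] subgroup.subset[OF PS]
      unfolding A_def by auto
    then show "nonabelian_subset G A" using naP nonabelian_subset_mono by blast
    have "coprime (q ^ b) (p ^ a)" using primes_coprime[OF q p] \<open>p \<noteq> q\<close> by simp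
    moreover have "q ^ b dvd p ^ a * m" using lagrange[OF QS] b n by (metis dvd_triv_right)
    ultimately obtain r where "m = q ^ b * r" using coprime_dvd_mult_right_iff by blast
    then have "Q \<subseteq> B"
      using pow_card_subgroup_eq_one[OF QS fin] b subgroup.subset[OF QS] nat_pow_pow
      unfolding B_def by (auto simp flip: nat_pow_pow)
    then show "nonabelian_subset G B" using naQ nonabelian_subset_mono by blast
  qed
qed

section \<open>Centralizers and products of subgroups\<close>

lemma proper_subgroup_card_le_half:
  assumes K: "subgroup K G" and ne: "K \<noteq> carrier G" and fin: "finite (carrier G)"
  shows "2 * card K \<le> order G"
proof -
  have l: "card (rcosets K) * card K = order G" using lagrange[OF K] .
  have "card K \<noteq> order G"
    using card_subset_eq[OF fin subgroup.subset[OF K]] ne unfolding order_def by auto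
  then have "card (rcosets K) \<noteq> 1" using l by auto
  moreover have "order G \<noteq> 0" using fin one_closed unfolding order_def by (auto simp: card_eq_0_iff)
  then have "card (rcosets K) \<noteq> 0" using l by (metis mult_zero_left)
  ultimately have "2 \<le> card (rcosets K)" by simp
  then show ?thesis using l by (metis mult_le_mono1)
qed

text \<open>The fibres of \<open>(u, v) \<mapsto> u v\<close> on \<open>U \<times> V\<close> are the sets \<open>{(u w, w\<inverse> v) | w \<in> U \<inter> V}\<close>.\<close>

lemma card_set_mult_mult_card_Int:
  assumes U: "subgroup U G" and V: "subgroup V G" and fin: "finite (carrier G)"
  shows "card (U <#> V) * card (U \<inter> V) = card U * card V"
proof -
  have Uc: "U \<subseteq> carrier G" and Vc: "V \<subseteq> carrier G" using U V subgroup.subset by auto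
  define F where "F g = {p \<in> U \<times> V. fst p \<otimes> snd p = g}" for g
  have fibre: "card (F g) = card (U \<inter> V)" if gUV: "g \<in> U <#> V" for g
  proof -
    obtain u0 v0 where u0: "u0 \<in> U" and v0: "v0 \<in> V" and g: "g = u0 \<otimes> v0"
      using gUV unfolding set_mult_def by blast
    have u0c: "u0 \<in> carrier G" and v0c: "v0 \<in> carrier G" using u0 v0 Uc Vc by auto
    have "F g = (\<lambda>w. (u0 \<otimes> w, inv w \<otimes> v0)) ` (U \<inter> V)"
    proof (intro equalityI subsetI)
      fix p assume "p \<in> F g"
      then obtain u v where p: "p = (u, v)" and u: "u \<in> U" and v: "v \<in> V" and uv: "u \<otimes> v = u0 \<otimes> v0"
        unfolding F_def g by auto
      have uc: "u \<in> carrier G" and vc: "v \<in> carrier G" using u v Uc Vc by auto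
      have w: "inv u0 \<otimes> u = v0 \<otimes> inv v"
        using uv uc vc u0c v0c by (metis inv_closed m_assoc m_closed r_inv r_one inv_mult_cancel_left)
      have "inv u0 \<otimes> u \<in> U" "v0 \<otimes> inv v \<in> V"
        using u u0 v v0 U V by (simp_all add: subgroup.m_closed subgroup.m_inv_closed)
      then have "inv u0 \<otimes> u \<in> U \<inter> V" using w by simp
      moreover have "p = (u0 \<otimes> (inv u0 \<otimes> u), inv (inv u0 \<otimes> u) \<otimes> v0)"
        using p uv[symmetric] uc vc u0c v0c by (simp add: inv_mult_group m_assoc)
      ultimately show "p \<in> (\<lambda>w. (u0 \<otimes> w, inv w \<otimes> v0)) ` (U \<inter> V)" by blast
    next
      fix p assume "p \<in> (\<lambda>w. (u0 \<otimes> w, inv w \<otimes> v0)) ` (U \<inter> V)"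
      then obtain w where p: "p = (u0 \<otimes> w, inv w \<otimes> v0)" and w: "w \<in> U" "w \<in> V" by blast
      have "w \<in> carrier G" using w Uc by auto
      then show "p \<in> F g"
        unfolding F_def g p using u0 v0 w U V u0c v0c
        by (simp add: subgroup.m_closed subgroup.m_inv_closed m_assoc)
    qed
    moreover have "inj_on (\<lambda>w. (u0 \<otimes> w, inv w \<otimes> v0)) (U \<inter> V)"
      using u0c Uc by (intro inj_onI) (simp add: subset_iff)
    ultimately show ?thesis by (simp add: card_image)
  qed
  have cover: "U \<times> V = (\<Union>g \<in> U <#> V. F g)" unfolding F_def set_mult_def by auto blast
  have finUV: "finite (U \<times> V)" using finite_subset[OF Uc fin] finite_subset[OF Vc fin] by simp
  have "card U * card V = card (U \<times> V)" by (simp add: card_cartesian_product)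
  also have "\<dots> = (\<Sum>g \<in> U <#> V. card (F g))" unfolding cover
  proof (rule card_UN_disjoint)
    show "finite (U <#> V)" using finite_subset[OF set_mult_closed[OF Uc Vc] fin] .
    show "\<forall>g \<in> U <#> V. finite (F g)" using finUV unfolding F_def by auto
    show "\<forall>g \<in> U <#> V. \<forall>h \<in> U <#> V. g \<noteq> h \<longrightarrow> F g \<inter> F h = {}" unfolding F_def by auto
  qed
  also have "\<dots> = card (U <#> V) * card (U \<inter> V)" using fibre by simp
  finally show ?thesis by simp
qed

end

definition centralizer :: "('a, 'b) monoid_scheme \<Rightarrow> 'a set \<Rightarrow> 'a set" where
  "centralizer G S = {g \<in> carrier G. \<forall>s \<in> S. g \<otimes>\<^bsub>G\<^esub> s = s \<otimes>\<^bsub>G\<^esub> g}"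

lemma centralizer_subset_carrier: "centralizer G S \<subseteq> carrier G"
  unfolding centralizer_def by auto

lemma centralizer_Un: "centralizer G (S \<union> T) = centralizer G S \<inter> centralizer G T"
  unfolding centralizer_def by auto

lemma centralizer_empty: "centralizer G {} = carrier G"
  unfolding centralizer_def by auto

lemma centralizer_Diff_center: "centralizer G (S - group_center G) = centralizer G S"
  unfolding centralizer_def group_center_def by force

lemma group_center_subset_centralizer: "S \<subseteq> carrier G \<Longrightarrow> group_center G \<subseteq> centralizer G S"
  unfolding group_center_def centralizer_def by blast

lemma centralizer_ne_carrier: "nonabelian_subset G A \<Longrightarrow> A \<subseteq> carrier G \<Longrightarrow> centralizer G A \<noteq> carrier G"
  unfolding nonabelian_subset_def centralizer_def by blast

context group
begin

lemma subgroup_centralizer: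
  assumes "S \<subseteq> carrier G" shows "subgroup (centralizer G S) G"
proof
  fix x y assume x: "x \<in> centralizer G S" and y: "y \<in> centralizer G S"
  then have xc: "x \<in> carrier G" and yc: "y \<in> carrier G" unfolding centralizer_def by auto
  have "x \<otimes> y \<otimes> s = s \<otimes> (x \<otimes> y)" if s: "s \<in> S" for s
  proof -
    have sc: "s \<in> carrier G" using s assms by blast
    have "x \<otimes> y \<otimes> s = x \<otimes> (s \<otimes> y)" using x y s xc yc sc unfolding centralizer_def by (simp add: m_assoc)
    also have "\<dots> = s \<otimes> (x \<otimes> y)" using x s xc yc sc unfolding centralizer_def by (simp add: m_assoc[symmetric])
    finally show ?thesis .
  qed
  then show "x \<otimes> y \<in> centralizer G S" using xc yc unfolding centralizer_def by auto
next
  fix x assume x: "x \<in> centralizer G S"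
  then have xc: "x \<in> carrier G" unfolding centralizer_def by auto
  then show "inv x \<in> centralizer G S" using x inv_commute assms unfolding centralizer_def by blast
qed (use assms in \<open>auto simp: centralizer_def\<close>)

lemma centralizers_of_commuting_factorization:
  assumes A: "A \<subseteq> carrier G" and B: "B \<subseteq> carrier G"
    and comm: "\<And>x y. x \<in> A \<Longrightarrow> y \<in> B \<Longrightarrow> x \<otimes> y = y \<otimes> x" and AB: "A <#> B = carrier G"
  shows "centralizer G A <#> centralizer G B = carrier G"
    and "centralizer G A \<inter> centralizer G B = group_center G"
proof -
  show "centralizer G A <#> centralizer G B = carrier G"
  proof
    show "centralizer G A <#> centralizer G B \<subseteq> carrier G"
      by (intro set_mult_closed centralizer_subset_carrier)
    show "carrier G \<subseteq> centralizer G A <#> centralizer G B"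
    proof
      fix g assume "g \<in> carrier G"
      then obtain x y where xy: "x \<in> A" "y \<in> B" "g = x \<otimes> y" using AB unfolding set_mult_def by blast
      have "y \<in> centralizer G A" using xy B comm unfolding centralizer_def by force
      moreover have "x \<in> centralizer G B" using xy A comm unfolding centralizer_def by force
      moreover have "g = y \<otimes> x" using xy comm by simp
      ultimately show "g \<in> centralizer G A <#> centralizer G B" unfolding set_mult_def by blast
    qed
  qed
  show "centralizer G A \<inter> centralizer G B = group_center G"
  proof
    show "centralizer G A \<inter> centralizer G B \<subseteq> group_center G"
    proof
      fix z assume z: "z \<in> centralizer G A \<inter> centralizer G B"
      have zc: "z \<in> carrier G" using z centralizer_subset_carrier[of G] by blast
      have "z \<otimes> g = g \<otimes> z" if "g \<in> carrier G" for g
      proof -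
        obtain x y where xy: "x \<in> A" "y \<in> B" "g = x \<otimes> y" using AB \<open>g \<in> carrier G\<close> unfolding set_mult_def by blast
        have xc: "x \<in> carrier G" and yc: "y \<in> carrier G" using xy A B by auto
        have zx: "z \<otimes> x = x \<otimes> z" and zy: "z \<otimes> y = y \<otimes> z"
          using z xy unfolding centralizer_def by auto
        have "z \<otimes> (x \<otimes> y) = x \<otimes> (z \<otimes> y)" using zx zc xc yc by (simp add: m_assoc[symmetric])
        also have "\<dots> = (x \<otimes> y) \<otimes> z" using zy zc xc yc by (simp add: m_assoc)
        finally show ?thesis using xy by simp
      qed
      then show "z \<in> group_center G" unfolding group_center_def using zc by blast
    qed
    show "group_center G \<subseteq> centralizer G A \<inter> centralizer G B"
      using group_center_subset_centralizer A B by blast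
  qed
qed

end

section \<open>Isomorphisms of non-commuting graphs\<close>

definition noncomm_graph_iso_map ::
    "('a, 'b) monoid_scheme \<Rightarrow> ('c, 'd) monoid_scheme \<Rightarrow> ('a \<Rightarrow> 'c) \<Rightarrow> bool" where
  "noncomm_graph_iso_map G H f \<longleftrightarrow> bij_betw f (carrier G - group_center G) (carrier H - group_center H)
     \<and> (\<forall>x \<in> carrier G - group_center G. \<forall>y \<in> carrier G - group_center G.
          x \<otimes>\<^bsub>G\<^esub> y = y \<otimes>\<^bsub>G\<^esub> x \<longleftrightarrow> f x \<otimes>\<^bsub>H\<^esub> f y = f y \<otimes>\<^bsub>H\<^esub> f x)"

lemma noncomm_graph_iso_iff: "noncomm_graph_iso G H \<longleftrightarrow> (\<exists>f. noncomm_graph_iso_map G H f)"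
  unfolding noncomm_graph_iso_def noncomm_graph_iso_map_def by simp

lemma noncomm_graph_iso_map_inv:
  assumes "noncomm_graph_iso_map G H f"
  shows "noncomm_graph_iso_map H G (the_inv_into (carrier G - group_center G) f)"
proof -
  let ?VG = "carrier G - group_center G" and ?VH = "carrier H - group_center H"
  let ?g = "the_inv_into ?VG f"
  have bij: "bij_betw f ?VG ?VH" and adj: "\<forall>x \<in> ?VG. \<forall>y \<in> ?VG.
      x \<otimes>\<^bsub>G\<^esub> y = y \<otimes>\<^bsub>G\<^esub> x \<longleftrightarrow> f x \<otimes>\<^bsub>H\<^esub> f y = f y \<otimes>\<^bsub>H\<^esub> f x"
    using assms unfolding noncomm_graph_iso_map_def by auto
  have bij': "bij_betw ?g ?VH ?VG" using bij by (rule bij_betw_the_inv_into)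
  have "?g x \<otimes>\<^bsub>G\<^esub> ?g y = ?g y \<otimes>\<^bsub>G\<^esub> ?g x \<longleftrightarrow> x \<otimes>\<^bsub>H\<^esub> y = y \<otimes>\<^bsub>H\<^esub> x" if "x \<in> ?VH" "y \<in> ?VH" for x y
    using adj bij_betw_apply[OF bij'] f_the_inv_into_f_bij_betw[OF bij] that by metis
  then show ?thesis using bij' unfolding noncomm_graph_iso_map_def by auto
qed

lemma noncomm_graph_iso_map_image_centralizer:
  assumes f: "noncomm_graph_iso_map G H f" and S: "S \<subseteq> carrier G - group_center G"
  shows "f ` (centralizer G S - group_center G) = centralizer H (f ` S) - group_center H"
proof -
  let ?VG = "carrier G - group_center G" and ?VH = "carrier H - group_center H"
  have bij: "bij_betw f ?VG ?VH" and adj: "\<And>x y. x \<in> ?VG \<Longrightarrow> y \<in> ?VG \<Longrightarrow>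
      x \<otimes>\<^bsub>G\<^esub> y = y \<otimes>\<^bsub>G\<^esub> x \<longleftrightarrow> f x \<otimes>\<^bsub>H\<^esub> f y = f y \<otimes>\<^bsub>H\<^esub> f x"
    using f unfolding noncomm_graph_iso_map_def by auto
  have "centralizer G S - group_center G = {x \<in> ?VG. \<forall>s \<in> S. x \<otimes>\<^bsub>G\<^esub> s = s \<otimes>\<^bsub>G\<^esub> x}"
    unfolding centralizer_def by auto
  also have "\<dots> = {x \<in> ?VG. \<forall>s \<in> S. f x \<otimes>\<^bsub>H\<^esub> f s = f s \<otimes>\<^bsub>H\<^esub> f x}"
    using adj S by blast
  finally have "f ` (centralizer G S - group_center G) = f ` {x \<in> ?VG. \<forall>s \<in> S. f x \<otimes>\<^bsub>H\<^esub> f s = f s \<otimes>\<^bsub>H\<^esub> f x}" by simp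
  also have "\<dots> = {y \<in> ?VH. \<forall>s \<in> S. y \<otimes>\<^bsub>H\<^esub> f s = f s \<otimes>\<^bsub>H\<^esub> y}"
    using bij unfolding bij_betw_def by auto
  also have "\<dots> = centralizer H (f ` S) - group_center H"
    unfolding centralizer_def by auto
  finally show ?thesis .
qed

lemma card_centralizer_Diff_center:
  assumes "finite (carrier G)" "S \<subseteq> carrier G"
  shows "int (card (centralizer G S - group_center G))
       = int (card (centralizer G S)) - int (card (group_center G))"
  using group_center_subset_centralizer[OF assms(2)] centralizer_subset_carrier[of G S] assms(1)
  by (metis card_Diff_subset card_mono finite_subset of_nat_diff)

lemma noncomm_graph_iso_map_card_centralizer:
  assumes fin: "finite (carrier G)" "finite (carrier H)"
    and f: "noncomm_graph_iso_map G H f" and S: "S \<subseteq> carrier G - group_center G"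
  shows "int (card (centralizer G S)) - int (card (group_center G))
       = int (card (centralizer H (f ` S))) - int (card (group_center H))"
proof -
  have bij: "bij_betw f (carrier G - group_center G) (carrier H - group_center H)"
    using f unfolding noncomm_graph_iso_map_def by blast
  have SH: "f ` S \<subseteq> carrier H" using bij_betw_imp_surj_on[OF bij] S by blast
  have "inj_on f (centralizer G S - group_center G)"
    by (rule inj_on_subset[OF bij_betw_imp_inj_on[OF bij]]) (use centralizer_subset_carrier[of G S] in blast)
  then have "card (centralizer G S - group_center G) = card (centralizer H (f ` S) - group_center H)"
    using card_image noncomm_graph_iso_map_image_centralizer[OF f S] by metis
  then show ?thesis using card_centralizer_Diff_center fin S SH by (metis Diff_subset subset_trans)
qed

text \<open>For \<open>t < 0\<close>: \<open>(a + t)(b + t) - (n + t)(z + t) = (a b - n z) + t (a + b - n - z) > 0\<close>,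
  because \<open>a + b \<le> n < n + z\<close>.\<close>

lemma nonneg_of_shifted_product_le:
  fixes n z a b t :: int
  assumes "1 \<le> z" "2 * a \<le> n" "2 * b \<le> n" "n * z \<le> a * b"
    and "(a + t) * (b + t) \<le> (n + t) * (z + t)"
  shows "0 \<le> t"
proof (rule ccontr)
  assume "\<not> 0 \<le> t"
  then have "0 < t * (a + b - n - z)" using assms(1-3) by (simp add: mult_neg_neg)
  moreover have "(a + t) * (b + t) - (n + t) * (z + t) = (a * b - n * z) + t * (a + b - n - z)"
    by (simp add: algebra_simps)
  ultimately show False using assms(4,5) by linarith
qed

text \<open>The graph determines \<open>|C(X)| - |Z|\<close> for \<open>X = S, T, S \<union> T, \<emptyset>\<close>; so passing from \<open>G\<close> to \<open>H\<close>
  shifts \<open>|C(S)|\<close>, \<open>|C(T)|\<close>, \<open>|C(S) \<inter> C(T)| = |Z|\<close> and the group order by the same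
  \<open>t = |Z(H)| - |Z(G)|\<close>. The product formula is an equality in \<open>G\<close> and an inequality in \<open>H\<close>.\<close>

lemma card_center_le_of_centralizer_factorization:
  fixes G :: "('a, 'b) monoid_scheme" and H :: "('c, 'd) monoid_scheme"
  assumes G: "group G" and H: "group H" and finG: "finite (carrier G)" and finH: "finite (carrier H)"
    and f: "noncomm_graph_iso_map G H f"
    and S: "S \<subseteq> carrier G - group_center G" and T: "T \<subseteq> carrier G - group_center G"
    and prod: "centralizer G S <#>\<^bsub>G\<^esub> centralizer G T = carrier G"
    and meet: "centralizer G S \<inter> centralizer G T = group_center G"
    and properS: "centralizer G S \<noteq> carrier G" and properT: "centralizer G T \<noteq> carrier G"
  shows "card (group_center G) \<le> card (group_center H)"
proof -
  interpret G: group G by fact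
  interpret H: group H by fact
  let ?U\<^sub>0 = "centralizer G S" and ?V\<^sub>0 = "centralizer G T"
  let ?U = "centralizer H (f ` S)" and ?V = "centralizer H (f ` T)"
  let ?ZG = "group_center G" and ?ZH = "group_center H"
  have "bij_betw f (carrier G - ?ZG) (carrier H - ?ZH)"
    using f unfolding noncomm_graph_iso_map_def by blast
  then have fS: "f ` S \<subseteq> carrier H" and fT: "f ` T \<subseteq> carrier H"
    using S T bij_betw_imp_surj_on by blast+
  have SG: "S \<subseteq> carrier G" and TG: "T \<subseteq> carrier G" using S T by auto
  define t where "t = int (card ?ZH) - int (card ?ZG)"
  have prodG: "card ?U\<^sub>0 * card ?V\<^sub>0 = order G * card ?ZG"
    using G.card_set_mult_mult_card_Int[OF G.subgroup_centralizer[OF SG] G.subgroup_centralizer[OF TG] finG]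
    unfolding prod meet order_def by simp
  have prodH: "card ?U * card ?V \<le> order H * card (?U \<inter> ?V)"
  proof -
    have "card (?U <#>\<^bsub>H\<^esub> ?V) \<le> order H"
      unfolding order_def using finH by (intro card_mono H.set_mult_closed centralizer_subset_carrier)
    then show ?thesis
      using H.card_set_mult_mult_card_Int[OF H.subgroup_centralizer[OF fS] H.subgroup_centralizer[OF fT] finH]
      by (metis mult_le_mono1)
  qed
  have half: "2 * card ?U\<^sub>0 \<le> order G" "2 * card ?V\<^sub>0 \<le> order G"
    using G.proper_subgroup_card_le_half G.subgroup_centralizer SG TG properS properT finG by auto
  have "\<one>\<^bsub>G\<^esub> \<in> ?ZG" unfolding group_center_def by simp
  then have "1 \<le> card ?ZG"
    using finite_subset[of ?ZG, OF _ finG] unfolding group_center_def by (auto simp: Suc_le_eq card_gt_0_iff)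
  have iU: "int (card ?U) = int (card ?U\<^sub>0) + t" and iV: "int (card ?V) = int (card ?V\<^sub>0) + t"
    using noncomm_graph_iso_map_card_centralizer[OF finG finH f S]
      noncomm_graph_iso_map_card_centralizer[OF finG finH f T] unfolding t_def by linarith+
  have iUV: "int (card (?U \<inter> ?V)) = int (card ?ZG) + t"
    using noncomm_graph_iso_map_card_centralizer[OF finG finH f Un_least[OF S T]]
    unfolding centralizer_Un image_Un meet t_def by linarith
  have iH: "int (order H) = int (order G) + t"
    using noncomm_graph_iso_map_card_centralizer[OF finG finH f, of "{}"]
    unfolding t_def by (simp add: centralizer_empty order_def)
  have "int (card ?U) * int (card ?V) \<le> int (order H) * int (card (?U \<inter> ?V))"
    using prodH by (metis of_nat_le_iff of_nat_mult)
  then have "(int (card ?U\<^sub>0) + t) * (int (card ?V\<^sub>0) + t) \<le> (int (order G) + t) * (int (card ?ZG) + t)"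
    unfolding iU iV iUV iH .
  moreover have "int (order G) * int (card ?ZG) = int (card ?U\<^sub>0) * int (card ?V\<^sub>0)"
    using prodG by (metis of_nat_mult)
  moreover have "1 \<le> int (card ?ZG)" "2 * int (card ?U\<^sub>0) \<le> int (order G)" "2 * int (card ?V\<^sub>0) \<le> int (order G)"
    using \<open>1 \<le> card ?ZG\<close> half by linarith+
  ultimately have "0 \<le> t" using nonneg_of_shifted_product_le by (metis order.refl)
  then show ?thesis unfolding t_def by simp
qed

lemma card_center_le_of_nilpotent_two_nonabelian_sylows:
  fixes G :: "('a, 'b) monoid_scheme" and H :: "('c, 'd) monoid_scheme"
  assumes G: "group G" and H: "group H" and finG: "finite (carrier G)" and finH: "finite (carrier H)"
    and nil: "nilpotent_group G" and two: "two_nonabelian_sylows G"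
    and f: "noncomm_graph_iso_map G H f"
  shows "card (group_center G) \<le> card (group_center H)"
proof -
  interpret G: group G by fact
  obtain A B where A: "A \<subseteq> carrier G" and B: "B \<subseteq> carrier G"
    and comm: "\<And>x y. x \<in> A \<Longrightarrow> y \<in> B \<Longrightarrow> x \<otimes>\<^bsub>G\<^esub> y = y \<otimes>\<^bsub>G\<^esub> x"
    and AB: "A <#>\<^bsub>G\<^esub> B = carrier G" and "nonabelian_subset G A" "nonabelian_subset G B"
    using G.nilpotent_commuting_nonabelian_factorization[OF nil finG two] by metis
  show ?thesis
  proof (rule card_center_le_of_centralizer_factorization[OF G H finG finH f])
    show "A - group_center G \<subseteq> carrier G - group_center G" "B - group_center G \<subseteq> carrier G - group_center G"
      using A B by auto
    show "centralizer G (A - group_center G) <#>\<^bsub>G\<^esub> centralizer G (B - group_center G) = carrier G"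
      "centralizer G (A - group_center G) \<inter> centralizer G (B - group_center G) = group_center G"
      using G.centralizers_of_commuting_factorization[OF A B comm AB] by (simp_all add: centralizer_Diff_center)
    show "centralizer G (A - group_center G) \<noteq> carrier G" "centralizer G (B - group_center G) \<noteq> carrier G"
      using centralizer_ne_carrier A B \<open>nonabelian_subset G A\<close> \<open>nonabelian_subset G B\<close>
      by (simp_all add: centralizer_Diff_center)
  qed
qed

theorem corollary2p5:
  fixes G :: "('a, 'b) monoid_scheme" and H :: "('c, 'd) monoid_scheme"
  assumes "group G" and "finite (carrier G)" and "nilpotent_group G"
    and "group H" and "finite (carrier H)" and "nilpotent_group H"
    and "two_nonabelian_sylows G" and "two_nonabelian_sylows H"
    and "noncomm_graph_iso G H"
  shows "order G = order H"
proof -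
  obtain f where f: "noncomm_graph_iso_map G H f" using assms(9) unfolding noncomm_graph_iso_iff by blast
  have "card (group_center G) \<le> card (group_center H)"
    by (rule card_center_le_of_nilpotent_two_nonabelian_sylows[OF assms(1,4,2,5,3,7) f])
  moreover have "card (group_center H) \<le> card (group_center G)"
    by (rule card_center_le_of_nilpotent_two_nonabelian_sylows[OF assms(4,1,5,2,6,8) noncomm_graph_iso_map_inv[OF f]])
  moreover have "int (order G) - card (group_center G) = int (order H) - card (group_center H)"
    using noncomm_graph_iso_map_card_centralizer[OF assms(2,5) f, of "{}"]
    by (simp add: centralizer_empty order_def)
  ultimately show ?thesis by linarith
qed

end
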